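(* Let $\eta\in(0,1)$ and let $\mathbf{u}\in\mathbb{R}^{d_x}$, $\mathbf{v}\in\mathbb{R}^{d_y}$ be nonzero. If $\mathrm{align}((\mathbf{u},\mathbf{v});(\mathbf{u}^*,\mathbf{v}^* ))\ge1-\frac\eta8$, then $\frac{\mathbf{u}^\top\Sigma_{xy}\mathbf{v}}{\sqrt{\mathbf{u}^\top\Sigma_{xx}\mathbf{u}}\sqrt{\mathbf{v}^\top\Sigma_{yy}\mathbf{v}}}\ge\rho_1(1-\eta)$.
   Context: $\mathbf{x}\in\mathbb{R}^{d_x}$, $\mathbf{y}\in\mathbb{R}^{d_y}$ are zero-mean random vectors with $\Sigma_{xx}=\mathbb{E}\mathbf{x}\mathbf{x}^\top$, $\Sigma_{yy}=\mathbb{E}\mathbf{y}\mathbf{y}^\top$ positive definite and $\Sigma_{xy}=\mathbb{E}\mathbf{x}\mathbf{y}^\top$. $\mathbf{T}=\Sigma_{xx}^{-1/2}\Sigma_{xy}\Sigma_{yy}^{-1/2}$ has largest singular value $\rho_1$ with unit top left/right singular vectors $(\mathbf{a}_1,\mathbf{b}_1)$ (assumed unique up to a common sign, i.e. $\rho_1>\rho_2$), and $(\mathbf{u}^*,\mathbf{v}^* )=(\Sigma_{xx}^{-1/2}\mathbf{a}_1,\Sigma_{yy}^{-1/2}\mathbf{b}_1)$. For nonzero $\mathbf{u},\mathbf{v}$, $\mathrm{align}((\mathbf{u},\mathbf{v});(\mathbf{u}^*,\mathbf{v}^* )):=\frac12\big(\frac{\mathbf{u}^\top\Sigma_{xx}\mathbf{u}^*}{\|\Sigma_{xx}^{1/2}\mathbf{u}\|}+\frac{\mathbf{v}^\top\Sigma_{yy}\mathbf{v}^*}{\|\Sigma_{yy}^{1/2}\mathbf{v}\|}\big)$.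 *)

theory Defs
  imports "HOL-Analysis.Analysis"
begin

definition psd_mat :: "real^'n^'n \<Rightarrow> bool" where
  "psd_mat A \<longleftrightarrow> transpose A = A \<and> (\<forall>p. 0 \<le> p \<bullet> (A *v p))"

definition pd_mat :: "real^'n^'n \<Rightarrow> bool" where
  "pd_mat A \<longleftrightarrow> transpose A = A \<and> (\<forall>p. p \<noteq> 0 \<longrightarrow> 0 < p \<bullet> (A *v p))"

definition msqrt :: "real^'n^'n \<Rightarrow> real^'n^'n" where
  "msqrt A = (THE S. psd_mat S \<and> S ** S = A)"

definition minvsqrt :: "real^'n^'n \<Rightarrow> real^'n^'n" where
  "minvsqrt A = matrix_inv (msqrt A)"

text \<open>(Cxx, Cxy, Cyy) are the covariance blocks of a pair of zero-mean random
  vectors (x,y) with Cxx, Cyy positive definite: equivalently the joint covariance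
  matrix [[Cxx, Cxy],[Cxy^T, Cyy]] is PSD.\<close>
definition cov_blocks :: "real^'a^'a \<Rightarrow> real^'b^'a \<Rightarrow> real^'b^'b \<Rightarrow> bool" where
  "cov_blocks Cxx Cxy Cyy \<longleftrightarrow> pd_mat Cxx \<and> pd_mat Cyy \<and>
     (\<forall>p q. 0 \<le> p \<bullet> (Cxx *v p) + 2 * (p \<bullet> (Cxy *v q)) + q \<bullet> (Cyy *v q))"

definition Tmat :: "real^'a^'a \<Rightarrow> real^'b^'a \<Rightarrow> real^'b^'b \<Rightarrow> real^'b^'a" where
  "Tmat Cxx Cxy Cyy = minvsqrt Cxx ** Cxy ** minvsqrt Cyy"

definition sing_pair :: "real^'b^'a \<Rightarrow> real \<Rightarrow> real^'a \<Rightarrow> real^'b \<Rightarrow> bool" where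
  "sing_pair T s a b \<longleftrightarrow> 0 \<le> s \<and> norm a = 1 \<and> norm b = 1 \<and>
     T *v b = s *\<^sub>R a \<and> transpose T *v a = s *\<^sub>R b"

definition top_sing_pair :: "real^'b^'a \<Rightarrow> real \<Rightarrow> real^'a \<Rightarrow> real^'b \<Rightarrow> bool" where
  "top_sing_pair T s a b \<longleftrightarrow> sing_pair T s a b \<and>
     (\<forall>s' a' b'. sing_pair T s' a' b' \<longrightarrow> s' \<le> s)"

definition align :: "real^'a^'a \<Rightarrow> real^'b^'b \<Rightarrow> real^'a \<Rightarrow> real^'b \<Rightarrow> real^'a \<Rightarrow> real^'b \<Rightarrow> real" where
  "align Cxx Cyy u v us vs =
     (1/2) * ((u \<bullet> (Cxx *v us)) / norm (msqrt Cxx *v u)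
            + (v \<bullet> (Cyy *v vs)) / norm (msqrt Cyy *v v))"

end

theory Submission
  imports Defs
begin

text \<open>Whitening by Sxx = \<Sigma>xx^(1/2) and Syy = \<Sigma>yy^(1/2) turns the correlation of (u,v) into
  p \<bullet> T q for the unit vectors p, q in the directions of Sxx u, Syy v, and the alignment
  into the mean of the cosines \<alpha> = p \<bullet> a1, \<beta> = q \<bullet> b1. Splitting p, q into components along
  and orthogonal to a1, b1, the parallel parts contribute \<alpha>\<beta>\<rho>1, and since \<rho>1 bounds the
  bilinear form of T on unit vectors, the orthogonal parts contribute at least
  -\<rho>1 (2 - \<alpha>^2 - \<beta>^2)/2. Hence p \<bullet> T q \<ge> \<rho>1 ((\<alpha> + \<beta>)^2/2 - 1) \<ge> \<rho>1 (1 - \<eta>) once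
  \<alpha> + \<beta> \<ge> 2 - \<eta>/4. The matrix square root comes from the spectral theorem for symmetric matrices.\<close>

lemma inner_matrix_vector_transpose:
  "(x::real^'m) \<bullet> (A *v y) = (transpose A *v x) \<bullet> (y::real^'n)"
  by (simp add: dot_lmul_matrix)

lemma inner_symmetric_matrix:
  "transpose A = A \<Longrightarrow> (x::real^'n) \<bullet> (A *v y) = (A *v x) \<bullet> y"
  by (metis inner_matrix_vector_transpose)

section \<open>Spectral theorem for symmetric matrices\<close>

lemma linear_term_nonpos_if_le_quadratic:
  fixes a D :: real
  assumes le: "\<And>t. 2 * t * a \<le> t\<^sup>2 * D"
  shows "a \<le> 0"
proof (rule ccontr)
  assume "\<not> a \<le> 0"
  define t where "t = a / (\<bar>D\<bar> + 1)"
  have t: "0 < t" "t * \<bar>D\<bar> < a" using \<open>\<not> a \<le> 0\<close> by (auto simp: t_def field_simps)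
  have "t * (2 * a) \<le> t * (t * D)" using le[of t] by (simp add: power2_eq_square algebra_simps)
  also have "\<dots> \<le> t * (t * \<bar>D\<bar>)" using t(1) by (intro mult_left_mono) auto
  finally have "2 * a \<le> t * \<bar>D\<bar>" using t(1) by simp
  with t(2) \<open>\<not> a \<le> 0\<close> show False by simp
qed

lemma rayleigh_maximizer_is_eigenvector:
  fixes A :: "real^'n^'n"
  assumes sym: "transpose A = A" and V: "subspace V" and inv: "\<And>x. x \<in> V \<Longrightarrow> A *v x \<in> V"
    and e: "e \<in> V" "norm e = 1"
    and max: "\<And>y. y \<in> V \<Longrightarrow> y \<bullet> (A *v y) \<le> (e \<bullet> (A *v e)) * (y \<bullet> y)"
  shows "A *v e = (e \<bullet> (A *v e)) *\<^sub>R e"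
proof -
  define l where "l = e \<bullet> (A *v e)"
  define w where "w = A *v e - l *\<^sub>R e"
  define c where "c = w \<bullet> (A *v w)"
  have ee: "e \<bullet> e = 1" using e(2) by (simp add: dot_square_norm)
  have wV: "w \<in> V" unfolding w_def using V inv e(1) by (simp add: subspace_diff subspace_scale)
  have we: "w \<bullet> e = 0" unfolding w_def l_def using ee
    by (simp add: inner_diff_left inner_diff_right inner_commute)
  have wAe: "w \<bullet> (A *v e) = w \<bullet> w" and eAw: "e \<bullet> (A *v w) = w \<bullet> w"
    using we inner_symmetric_matrix[OF sym, of e w]
    by (simp_all add: w_def l_def inner_diff_left inner_diff_right inner_commute)
  \<comment> \<open>w is the part of A e orthogonal to e; moving e along w raises the form to first order.\<close>
  have "2 * t * (w \<bullet> w) \<le> t\<^sup>2 * (l * (w \<bullet> w) - c)" for t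
  proof -
    have "(e + t *\<^sub>R w) \<bullet> (A *v (e + t *\<^sub>R w)) \<le> l * ((e + t *\<^sub>R w) \<bullet> (e + t *\<^sub>R w))"
      using max[of "e + t *\<^sub>R w"] V wV e(1) unfolding l_def
      by (simp add: subspace_add subspace_scale)
    then show ?thesis
      using ee we wAe eAw unfolding c_def
      by (simp add: matrix_vector_right_distrib matrix_vector_mult_scaleR inner_add_left
          inner_add_right inner_commute power2_eq_square algebra_simps flip: l_def)
  qed
  then have "w \<bullet> w \<le> 0"
    by (rule linear_term_nonpos_if_le_quadratic)
  then have "w = 0" by (metis inner_eq_zero_iff inner_ge_zero order_antisym)
  then show ?thesis unfolding w_def l_def by simp
qed

lemma symmetric_matrix_eigenvector_in_invariant_subspace:
  fixes A :: "real^'n^'n"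
  assumes sym: "transpose A = A" and V: "subspace V" and inv: "\<And>x. x \<in> V \<Longrightarrow> A *v x \<in> V"
    and nontriv: "V \<noteq> {0}"
  obtains e where "e \<in> V" "norm e = 1" "A *v e = (e \<bullet> (A *v e)) *\<^sub>R e"
proof -
  let ?K = "V \<inter> sphere 0 1"
  have "compact ?K" using closed_subspace[OF V] by (simp add: closed_Int_compact)
  moreover obtain z where "z \<in> V" "z \<noteq> 0" using nontriv subspace_0[OF V] by blast
  then have "sgn z \<in> ?K" using V by (simp add: sgn_div_norm subspace_scale norm_sgn)
  then have "?K \<noteq> {}" by blast
  moreover have "continuous_on ?K (\<lambda>x. x \<bullet> (A *v x))" by (intro continuous_intros)
  ultimately obtain e where "e \<in> ?K" and emax: "\<forall>y\<in>?K. y \<bullet> (A *v y) \<le> e \<bullet> (A *v e)"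
    using continuous_attains_sup by blast
  then have e: "e \<in> V" "norm e = 1" by auto
  have "y \<bullet> (A *v y) \<le> (e \<bullet> (A *v e)) * (y \<bullet> y)" if y: "y \<in> V" for y
  proof (cases "y = 0")
    case False
    then have "sgn y \<in> ?K" using y V by (simp add: sgn_div_norm subspace_scale norm_sgn)
    then have "sgn y \<bullet> (A *v sgn y) \<le> e \<bullet> (A *v e)" using emax by blast
    then show ?thesis
      using False by (simp add: sgn_div_norm matrix_vector_mult_scaleR dot_square_norm
          power2_eq_square field_simps)
  qed simp
  then show ?thesis
    using that e rayleigh_maximizer_is_eigenvector[OF sym V inv e] by blast
qed

lemma symmetric_matrix_orthonormal_eigenbasis_of_invariant_subspace:
  fixes A :: "real^'n^'n"
  assumes sym: "transpose A = A"
  shows "subspace V \<Longrightarrow> (\<And>x. x \<in> V \<Longrightarrow> A *v x \<in> V) \<Longrightarrow>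
    \<exists>B. B \<subseteq> V \<and> pairwise orthogonal B \<and> span B = V \<and>
        (\<forall>e\<in>B. norm e = 1 \<and> A *v e = (e \<bullet> (A *v e)) *\<^sub>R e)"
proof (induction "dim V" arbitrary: V rule: less_induct)
  case less
  show ?case
  proof (cases "V = {0}")
    case True
    then show ?thesis by (intro exI[of _ "{}"]) auto
  next
    case False
    then obtain e where e: "e \<in> V" "norm e = 1" "A *v e = (e \<bullet> (A *v e)) *\<^sub>R e"
      using symmetric_matrix_eigenvector_in_invariant_subspace[OF sym less.prems] by blast
    define V' where "V' = {x \<in> V. e \<bullet> x = 0}"
    have V': "subspace V'"
      unfolding V'_def subspace_def using less.prems(1)
      by (auto simp: subspace_add subspace_scale subspace_0 inner_add_right)
    have "A *v x \<in> V'" if "x \<in> V'" for x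
      using that less.prems(2) e(3) inner_symmetric_matrix[OF sym, of e x]
      unfolding V'_def by (metis (mono_tags, lifting) inner_scaleR_left mem_Collect_eq mult_zero_right)
    moreover have "dim V' < dim V"
    proof (rule dim_psubset)
      have "e \<notin> V'" using e(2) by (simp add: V'_def dot_square_norm)
      then have "V' \<subset> V" using e(1) unfolding V'_def by blast
      then show "span V' \<subset> span V" using V' less.prems(1) by (metis span_eq_iff)
    qed
    ultimately obtain B' where B': "B' \<subseteq> V'" "pairwise orthogonal B'" "span B' = V'"
        "\<forall>e\<in>B'. norm e = 1 \<and> A *v e = (e \<bullet> (A *v e)) *\<^sub>R e"
      using less.hyps V' by blast
    have "span (insert e B') = V"
    proof
      show "span (insert e B') \<subseteq> V"
        using e(1) B'(1) less.prems(1) by (intro span_minimal) (auto simp: V'_def)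
      show "V \<subseteq> span (insert e B')"
      proof
        fix x assume "x \<in> V"
        then have "x - (e \<bullet> x) *\<^sub>R e \<in> span B'"
          using B'(3) e less.prems(1)
          by (simp add: V'_def subspace_diff subspace_scale inner_diff_right dot_square_norm)
        then show "x \<in> span (insert e B')" by (auto simp: span_breakdown_eq)
      qed
    qed
    moreover have "pairwise orthogonal (insert e B')"
      using B'(1,2) by (auto simp: V'_def pairwise_insert orthogonal_def inner_commute)
    ultimately show ?thesis
      using e B' by (intro exI[of _ "insert e B'"]) (auto simp: V'_def)
  qed
qed

lemma inner_orthonormal_sum:
  fixes B :: "'a::real_inner set"
  assumes fin: "finite B" and orth: "pairwise orthogonal B" and unit: "\<And>e. e \<in> B \<Longrightarrow> norm e = 1"
    and e: "e \<in> B"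
  shows "e \<bullet> (\<Sum>e'\<in>B. c e' *\<^sub>R e') = c e"
proof -
  have "e \<bullet> (\<Sum>e'\<in>B. c e' *\<^sub>R e') = (\<Sum>e'\<in>B. c e' * (e \<bullet> e'))"
    by (simp add: inner_sum_right)
  also have "\<dots> = c e * (e \<bullet> e) + (\<Sum>e'\<in>B - {e}. c e' * (e \<bullet> e'))"
    using fin e by (simp add: sum.remove)
  also have "(\<Sum>e'\<in>B - {e}. c e' * (e \<bullet> e')) = 0"
    using orth e by (intro sum.neutral) (auto simp: pairwise_def orthogonal_def)
  finally show ?thesis using unit[OF e] by (simp add: dot_square_norm)
qed

lemma symmetric_matrix_orthonormal_eigenbasis:
  fixes A :: "real^'n^'n"
  assumes "transpose A = A"
  obtains B where "finite B" "pairwise orthogonal B" "\<And>e. e \<in> B \<Longrightarrow> norm e = 1"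
    "\<And>e. e \<in> B \<Longrightarrow> A *v e = (e \<bullet> (A *v e)) *\<^sub>R e" "\<And>x. (\<Sum>e\<in>B. (e \<bullet> x) *\<^sub>R e) = x"
proof -
  obtain B where orth: "pairwise orthogonal B" and span: "span B = UNIV"
    and eig: "\<forall>e\<in>B. norm e = 1 \<and> A *v e = (e \<bullet> (A *v e)) *\<^sub>R e"
    using symmetric_matrix_orthonormal_eigenbasis_of_invariant_subspace[OF assms, of UNIV] by auto
  have "0 \<notin> B" using eig by force
  then have fin: "finite B"
    using pairwise_orthogonal_independent[OF orth] eucl.finiteI_independent by blast
  have "(\<Sum>e\<in>B. (e \<bullet> x) *\<^sub>R e) = x" for x
  proof -
    define y where "y = x - (\<Sum>e\<in>B. (e \<bullet> x) *\<^sub>R e)"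
    have "orthogonal y e" if "e \<in> B" for e
      using inner_orthonormal_sum[OF fin orth _ that, of "\<lambda>e. e \<bullet> x"] eig
      by (simp add: y_def orthogonal_def inner_diff_left inner_diff_right inner_commute)
    then have "orthogonal y y" using orthogonal_to_span[of y B y] span by auto
    then show ?thesis by (simp add: y_def orthogonal_def)
  qed
  then show ?thesis using that fin orth eig by blast
qed

section \<open>Matrix square roots and whitening\<close>

lemma matrix_vector_mult_sum_outer:
  fixes B :: "(real^'n) set"
  shows "(\<chi> i j. \<Sum>e\<in>B. c e * (e $ i * e $ j)) *v x = (\<Sum>e\<in>B. (c e * (e \<bullet> x)) *\<^sub>R e)"
  by (simp add: vec_eq_iff matrix_vector_mult_def inner_vec_def sum_distrib_left
      sum_distrib_right sum_component algebra_simps sum.swap[of _ UNIV B])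

lemma psd_mat_sqrt_exists:
  fixes A :: "real^'n^'n"
  assumes psd: "psd_mat A"
  obtains S where "psd_mat S" "S ** S = A"
proof -
  have "transpose A = A" using psd by (simp add: psd_mat_def)
  then obtain B where fin: "finite B" and orth: "pairwise orthogonal B"
    and unit: "\<And>e. e \<in> B \<Longrightarrow> norm e = 1"
    and eig: "\<And>e. e \<in> B \<Longrightarrow> A *v e = (e \<bullet> (A *v e)) *\<^sub>R e"
    and expand: "\<And>x. (\<Sum>e\<in>B. (e \<bullet> x) *\<^sub>R e) = x"
    by (rule symmetric_matrix_orthonormal_eigenbasis) blast
  define l where "l e = e \<bullet> (A *v e)" for e
  have l: "0 \<le> l e" for e using psd unfolding psd_mat_def l_def by blast
  have Ae: "A *v e = l e *\<^sub>R e" if "e \<in> B" for e using eig[OF that] unfolding l_def .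
  have Ax: "A *v x = (\<Sum>e\<in>B. (l e * (e \<bullet> x)) *\<^sub>R e)" for x
  proof -
    have "e \<bullet> (A *v x) = l e * (e \<bullet> x)" if "e \<in> B" for e
      using Ae[OF that] inner_symmetric_matrix[of A e x] psd by (simp add: psd_mat_def)
    then have "(\<Sum>e\<in>B. (e \<bullet> (A *v x)) *\<^sub>R e) = (\<Sum>e\<in>B. (l e * (e \<bullet> x)) *\<^sub>R e)"
      by (intro sum.cong) auto
    then show ?thesis by (simp only: expand)
  qed
  define S :: "real^'n^'n" where "S = (\<chi> i j. \<Sum>e\<in>B. sqrt (l e) * (e $ i * e $ j))"
  have Sx: "S *v x = (\<Sum>e\<in>B. (sqrt (l e) * (e \<bullet> x)) *\<^sub>R e)" for x
    unfolding S_def by (rule matrix_vector_mult_sum_outer)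
  have "psd_mat S" unfolding psd_mat_def
  proof
    show "transpose S = S" unfolding S_def transpose_def by (simp add: mult.commute)
    have "p \<bullet> (S *v p) = (\<Sum>e\<in>B. sqrt (l e) * (e \<bullet> p)\<^sup>2)" for p
      by (simp add: Sx inner_sum_right inner_commute power2_eq_square mult.assoc)
    then show "\<forall>p. 0 \<le> p \<bullet> (S *v p)" using l by (simp add: sum_nonneg)
  qed
  moreover have "(S ** S) *v x = A *v x" for x
  proof -
    have "e \<bullet> (S *v x) = sqrt (l e) * (e \<bullet> x)" if "e \<in> B" for e
      unfolding Sx using inner_orthonormal_sum[OF fin orth unit that] by simp
    then have "S *v (S *v x) = (\<Sum>e\<in>B. (sqrt (l e) * sqrt (l e) * (e \<bullet> x)) *\<^sub>R e)"
      unfolding Sx[of "S *v x"] by (intro sum.cong) auto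
    also have "\<dots> = A *v x" unfolding Ax using l by (simp flip: real_sqrt_mult)
    finally show ?thesis by (simp add: matrix_vector_mul_assoc)
  qed
  then have "S ** S = A" by (simp add: matrix_eq)
  ultimately show ?thesis using that by blast
qed

lemma psd_sqrt_on_eigenvector:
  fixes R :: "real^'n^'n"
  assumes R: "psd_mat R" and e: "(R ** R) *v e = l *\<^sub>R e" and l: "0 \<le> l"
  shows "R *v e = sqrt l *\<^sub>R e"
proof -
  have RR: "R *v (R *v e) = l *\<^sub>R e" using e by (simp add: matrix_vector_mul_assoc)
  have Rsym: "transpose R = R" using R unfolding psd_mat_def by simp
  show ?thesis
  proof (cases "l = 0")
    case True
    have "(R *v e) \<bullet> (R *v e) = e \<bullet> (R *v (R *v e))" using inner_symmetric_matrix[OF Rsym] by metis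
    then show ?thesis using RR True by simp
  next
    case False
    define s where "s = sqrt l"
    have s: "0 < s" using l False by (simp add: s_def)
    define w where "w = R *v e - s *\<^sub>R e"
    \<comment> \<open>w is an eigenvector of R for the negative eigenvalue -s, so it vanishes.\<close>
    have "R *v w = (- s) *\<^sub>R w"
      using RR l by (simp add: w_def s_def matrix_vector_mult_diff_distrib matrix_vector_mult_scaleR
          algebra_simps flip: real_sqrt_mult)
    moreover have "0 \<le> w \<bullet> (R *v w)" using R unfolding psd_mat_def by blast
    ultimately have "w \<bullet> w \<le> 0" using s by (simp add: mult_le_0_iff)
    then have "w = 0" by (metis inner_eq_zero_iff inner_ge_zero order_antisym)
    then show ?thesis by (simp add: w_def s_def)
  qed
qed

lemma psd_mat_sqrt_unique:
  fixes R S :: "real^'n^'n"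
  assumes R: "psd_mat R" and S: "psd_mat S" and eq: "R ** R = S ** S"
  shows "R = S"
proof -
  have "transpose (R ** R) = R ** R"
    using R by (simp add: psd_mat_def matrix_transpose_mul)
  then obtain B where "finite B" "pairwise orthogonal B" "\<And>e. e \<in> B \<Longrightarrow> norm e = 1"
    and eig: "\<And>e. e \<in> B \<Longrightarrow> (R ** R) *v e = (e \<bullet> ((R ** R) *v e)) *\<^sub>R e"
    and expand: "\<And>x. (\<Sum>e\<in>B. (e \<bullet> x) *\<^sub>R e) = x"
    by (rule symmetric_matrix_orthonormal_eigenbasis) blast
  have nonneg: "0 \<le> e \<bullet> ((R ** R) *v e)" for e
    using inner_symmetric_matrix[of R e "R *v e"] R
    by (simp add: psd_mat_def matrix_vector_mul_assoc[symmetric])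
  have RS: "R *v e = S *v e" if "e \<in> B" for e
  proof -
    have "(S ** S) *v e = (e \<bullet> ((R ** R) *v e)) *\<^sub>R e" using eig[OF that] by (simp only: eq)
    then have "S *v e = sqrt (e \<bullet> ((R ** R) *v e)) *\<^sub>R e"
      by (rule psd_sqrt_on_eigenvector[OF S _ nonneg])
    then show ?thesis using psd_sqrt_on_eigenvector[OF R eig[OF that] nonneg] by simp
  qed
  have "R *v x = S *v x" for x
  proof -
    have "R *v x = (\<Sum>e\<in>B. (e \<bullet> x) *\<^sub>R (R *v e))"
      by (subst expand[of x, symmetric]) (simp add: vec.sum matrix_vector_mult_scaleR)
    also have "\<dots> = (\<Sum>e\<in>B. (e \<bullet> x) *\<^sub>R (S *v e))" using RS by simp
    also have "\<dots> = S *v x"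
      by (subst (2) expand[of x, symmetric]) (simp add: vec.sum matrix_vector_mult_scaleR)
    finally show ?thesis .
  qed
  then show ?thesis by (simp add: matrix_eq)
qed

lemma pd_mat_imp_psd_mat: "pd_mat A \<Longrightarrow> psd_mat A"
  unfolding pd_mat_def psd_mat_def by (metis order_refl inner_zero_left order_less_imp_le)

lemma msqrt_spec:
  assumes "psd_mat A"
  shows "psd_mat (msqrt A) \<and> msqrt A ** msqrt A = A"
proof -
  obtain S where "psd_mat S" "S ** S = A" using psd_mat_sqrt_exists[OF assms] .
  then have "\<exists>!S. psd_mat S \<and> S ** S = A" using psd_mat_sqrt_unique by blast
  then show ?thesis unfolding msqrt_def by (rule theI')
qed

lemma transpose_msqrt: "psd_mat A \<Longrightarrow> transpose (msqrt A) = msqrt A"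
  using msqrt_spec psd_mat_def by blast

lemma msqrt_mult_msqrt: "psd_mat A \<Longrightarrow> msqrt A ** msqrt A = A"
  using msqrt_spec by blast

lemma quadratic_form_msqrt:
  assumes "psd_mat A"
  shows "u \<bullet> (A *v u) = (norm (msqrt A *v u))\<^sup>2"
  using inner_symmetric_matrix[OF transpose_msqrt[OF assms], of u "msqrt A *v u"]
  by (simp add: msqrt_mult_msqrt[OF assms] matrix_vector_mul_assoc dot_square_norm)

lemma msqrt_mult_eq_0_iff:
  assumes "pd_mat A"
  shows "msqrt A *v u = 0 \<longleftrightarrow> u = 0"
proof
  assume "msqrt A *v u = 0"
  then have "u \<bullet> (A *v u) = 0"
    using quadratic_form_msqrt[OF pd_mat_imp_psd_mat[OF assms]] by simp
  then show "u = 0" using assms unfolding pd_mat_def by force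
qed simp

lemma msqrt_minvsqrt_inverse:
  assumes "pd_mat A"
  shows "msqrt A ** minvsqrt A = mat 1" and "minvsqrt A ** msqrt A = mat 1"
proof -
  have "invertible (msqrt A)"
    using msqrt_mult_eq_0_iff[OF assms] matrix_left_invertible_ker invertible_left_inverse by blast
  then have "msqrt A ** minvsqrt A = mat 1 \<and> minvsqrt A ** msqrt A = mat 1"
    unfolding minvsqrt_def matrix_inv_def invertible_def by (rule someI_ex)
  then show "msqrt A ** minvsqrt A = mat 1" and "minvsqrt A ** msqrt A = mat 1" by auto
qed

lemma transpose_minvsqrt:
  assumes "pd_mat A"
  shows "transpose (minvsqrt A) = minvsqrt A"
proof -
  let ?S = "msqrt A" and ?W = "minvsqrt A"
  have WS: "transpose ?W ** ?S = mat 1"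
    using msqrt_minvsqrt_inverse(1)[OF assms] transpose_msqrt[OF pd_mat_imp_psd_mat[OF assms]]
    by (metis matrix_transpose_mul transpose_mat)
  have "transpose ?W = transpose ?W ** (?S ** ?W)" by (simp add: msqrt_minvsqrt_inverse(1)[OF assms])
  also have "\<dots> = (transpose ?W ** ?S) ** ?W" by (simp add: matrix_mul_assoc)
  also have "\<dots> = ?W" by (simp add: WS)
  finally show ?thesis .
qed

lemma whitened_cosine:
  assumes "pd_mat A"
  shows "u \<bullet> (A *v (minvsqrt A *v a)) / norm (msqrt A *v u) = sgn (msqrt A *v u) \<bullet> a"
proof -
  have psd: "psd_mat A" using pd_mat_imp_psd_mat[OF assms] .
  have "A *v (minvsqrt A *v a) = msqrt A *v (msqrt A *v (minvsqrt A *v a))"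
    by (simp add: matrix_vector_mul_assoc matrix_mul_assoc msqrt_mult_msqrt[OF psd])
  also have "msqrt A *v (minvsqrt A *v a) = a"
    by (simp add: matrix_vector_mul_assoc msqrt_minvsqrt_inverse(1)[OF assms])
  finally have "A *v (minvsqrt A *v a) = msqrt A *v a" .
  then show ?thesis
    using inner_symmetric_matrix[OF transpose_msqrt[OF psd], of u a]
    by (simp add: sgn_div_norm divide_inverse mult.commute)
qed

lemma whitened_correlation:
  assumes A: "pd_mat A" and B: "pd_mat B"
  shows "sgn (msqrt A *v u) \<bullet> (Tmat A C B *v sgn (msqrt B *v v))
       = (u \<bullet> (C *v v)) / (sqrt (u \<bullet> (A *v u)) * sqrt (v \<bullet> (B *v v)))"
proof -
  have "minvsqrt B *v (msqrt B *v v) = v"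
    by (simp add: matrix_vector_mul_assoc msqrt_minvsqrt_inverse(2)[OF B])
  moreover have "Tmat A C B *v (msqrt B *v v) = minvsqrt A *v (C *v (minvsqrt B *v (msqrt B *v v)))"
    by (simp add: Tmat_def matrix_vector_mul_assoc matrix_mul_assoc)
  ultimately have "Tmat A C B *v (msqrt B *v v) = minvsqrt A *v (C *v v)" by simp
  moreover have "(msqrt A *v u) \<bullet> (minvsqrt A *v w) = u \<bullet> w" for w
    using inner_symmetric_matrix[OF transpose_minvsqrt[OF A], of "msqrt A *v u" w]
    by (simp add: matrix_vector_mul_assoc msqrt_minvsqrt_inverse[OF A])
  ultimately show ?thesis
    using quadratic_form_msqrt[OF pd_mat_imp_psd_mat[OF A], of u]
      quadratic_form_msqrt[OF pd_mat_imp_psd_mat[OF B], of v]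
    by (simp add: sgn_div_norm matrix_vector_mult_scaleR divide_inverse mult.commute)
qed

section \<open>Bilinear forms and singular pairs\<close>

lemma unit_maximizer_of_inner_parallel:
  fixes p w :: "'a::real_inner"
  assumes p: "norm p = 1" and max: "\<And>p'. norm p' = 1 \<Longrightarrow> p' \<bullet> w \<le> p \<bullet> w"
  shows "w = (p \<bullet> w) *\<^sub>R p"
proof (cases "w = 0")
  case False
  have "norm w \<le> p \<bullet> w"
    using max[of "sgn w"] False
    by (simp add: sgn_div_norm dot_square_norm power2_eq_square field_simps)
  moreover have "p \<bullet> w \<le> norm w" using norm_cauchy_schwarz[of p w] p by simp
  ultimately have pw: "p \<bullet> w = norm w" by simp
  have pp: "p \<bullet> p = 1" using p by (simp add: dot_square_norm)
  have "(w - (p \<bullet> w) *\<^sub>R p) \<bullet> (w - (p \<bullet> w) *\<^sub>R p) = w \<bullet> w - (p \<bullet> w)\<^sup>2"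
    using pp by (simp add: inner_diff_left inner_diff_right inner_commute power2_eq_square)
  also have "\<dots> = 0" by (simp add: pw dot_square_norm)
  finally show ?thesis by simp
qed simp

lemma bilinear_form_bounded_by_sing_pair:
  fixes T :: "real^'b^'a"
  obtains s p q where "sing_pair T s p q" "\<And>x y. x \<bullet> (T *v y) \<le> s * norm x * norm y"
proof -
  let ?K = "sphere (0::real^'a) 1 \<times> sphere (0::real^'b) 1"
  have "compact ?K" by (intro compact_Times compact_sphere)
  moreover have "continuous_on ?K (\<lambda>z. fst z \<bullet> (T *v snd z))"
    using continuous_on_compose2[OF matrix_vector_mult_linear_continuous_on[of UNIV T]
        continuous_on_snd[OF continuous_on_id]]
    by (intro continuous_intros) auto
  moreover have "?K \<noteq> {}"
    by (metis SigmaI empty_iff mem_sphere_0 norm_axis_1)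
  ultimately obtain z where "z \<in> ?K" and "\<forall>z'\<in>?K. fst z' \<bullet> (T *v snd z') \<le> fst z \<bullet> (T *v snd z)"
    using continuous_attains_sup by blast
  then obtain p q where p: "norm p = 1" and q: "norm q = 1"
    and max: "\<And>x y. norm x = 1 \<Longrightarrow> norm y = 1 \<Longrightarrow> x \<bullet> (T *v y) \<le> p \<bullet> (T *v q)"
    by (cases z) auto
  define s where "s = p \<bullet> (T *v q)"
  have "T *v q = s *\<^sub>R p"
    unfolding s_def using p q max by (intro unit_maximizer_of_inner_parallel) auto
  moreover have "transpose T *v p = s *\<^sub>R q"
  proof -
    have flip: "q' \<bullet> (transpose T *v p) = p \<bullet> (T *v q')" for q'
      by (metis inner_commute inner_matrix_vector_transpose)
    have "transpose T *v p = (q \<bullet> (transpose T *v p)) *\<^sub>R q"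
      by (rule unit_maximizer_of_inner_parallel[OF q]) (use p max in \<open>simp only: flip\<close>)
    then show ?thesis unfolding s_def flip .
  qed
  moreover have "0 \<le> s" using max[of "-p" q] p q unfolding s_def by simp
  ultimately have "sing_pair T s p q" using p q unfolding sing_pair_def by simp
  moreover have "x \<bullet> (T *v y) \<le> s * norm x * norm y" for x y
  proof (cases "x = 0 \<or> y = 0")
    case False
    then have "sgn x \<bullet> (T *v sgn y) \<le> s"
      unfolding s_def by (intro max) (auto simp: norm_sgn)
    then show ?thesis
      using False by (simp add: sgn_div_norm matrix_vector_mult_scaleR field_simps)
  qed auto
  ultimately show ?thesis using that by blast
qed

lemma top_sing_pair_bilinear_bound:
  assumes "top_sing_pair T r a b"
  shows "x \<bullet> (T *v y) \<le> r * norm x * norm y"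
proof -
  obtain s p q where "sing_pair T s p q" and bound: "x \<bullet> (T *v y) \<le> s * norm x * norm y"
    using bilinear_form_bounded_by_sing_pair by metis
  then have "s \<le> r" using assms unfolding top_sing_pair_def by blast
  then have "s * norm x * norm y \<le> r * norm x * norm y"
    by (intro mult_right_mono) auto
  then show ?thesis using bound by linarith
qed

lemma sing_pair_bilinear_form_lower_bound:
  fixes T :: "real^'b^'a"
  assumes sp: "sing_pair T r a b" and bound: "\<And>x y. x \<bullet> (T *v y) \<le> r * norm x * norm y"
    and p: "norm p = 1" and q: "norm q = 1"
  shows "r * ((p \<bullet> a + q \<bullet> b)\<^sup>2 / 2 - 1) \<le> p \<bullet> (T *v q)"
proof -
  have r: "0 \<le> r" and Tb: "T *v b = r *\<^sub>R a" and Ta: "transpose T *v a = r *\<^sub>R b"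
    and unit: "a \<bullet> a = 1" "b \<bullet> b = 1" "p \<bullet> p = 1" "q \<bullet> q = 1"
    using sp p q unfolding sing_pair_def by (simp_all add: dot_square_norm)
  define \<alpha> \<beta> where "\<alpha> = p \<bullet> a" and "\<beta> = q \<bullet> b"
  define p' q' where "p' = p - \<alpha> *\<^sub>R a" and "q' = q - \<beta> *\<^sub>R b"
  have q'b: "q' \<bullet> b = 0" unfolding q'_def \<beta>_def using unit by (simp add: inner_diff_left)
  have "p' \<bullet> p' = 1 - \<alpha>\<^sup>2" and "q' \<bullet> q' = 1 - \<beta>\<^sup>2"
    unfolding p'_def q'_def \<alpha>_def \<beta>_def using unit
    by (simp_all add: inner_diff_left inner_diff_right inner_commute power2_eq_square)
  then have np': "(norm p')\<^sup>2 = 1 - \<alpha>\<^sup>2" and nq': "(norm q')\<^sup>2 = 1 - \<beta>\<^sup>2"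
    by (simp_all add: dot_square_norm)
  have "p \<bullet> (T *v q') = (transpose T *v p) \<bullet> q'" by (rule inner_matrix_vector_transpose)
  also have "\<dots> = (transpose T *v p') \<bullet> q'"
    using q'b Ta by (simp add: p'_def matrix_vector_mult_diff_distrib matrix_vector_mult_scaleR
        inner_diff_left inner_diff_right inner_commute)
  also have "\<dots> = p' \<bullet> (T *v q')" by (rule inner_matrix_vector_transpose[symmetric])
  finally have pTq': "p \<bullet> (T *v q') = p' \<bullet> (T *v q')" .
  have "T *v q = (\<beta> * r) *\<^sub>R a + T *v q'"
    using Tb by (simp add: q'_def matrix_vector_mult_diff_distrib matrix_vector_mult_scaleR)
  then have split: "p \<bullet> (T *v q) = \<alpha> * \<beta> * r + p' \<bullet> (T *v q')"
    by (simp add: inner_add_right pTq' \<alpha>_def)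
  have "- (r * norm p' * norm q') \<le> p' \<bullet> (T *v q')" using bound[of "- p'" q'] by simp
  moreover have "norm p' * norm q' \<le> (2 - \<alpha>\<^sup>2 - \<beta>\<^sup>2) / 2"
    using sum_squares_ge_zero[of "norm p' - norm q'" 0] np' nq'
    by (simp add: power2_eq_square algebra_simps)
  then have "r * (norm p' * norm q') \<le> r * ((2 - \<alpha>\<^sup>2 - \<beta>\<^sup>2) / 2)" using r by (rule mult_left_mono)
  moreover have "r * ((\<alpha> + \<beta>)\<^sup>2 / 2 - 1) = \<alpha> * \<beta> * r - r * ((2 - \<alpha>\<^sup>2 - \<beta>\<^sup>2) / 2)"
    by (simp add: power2_eq_square field_simps)
  ultimately show ?thesis unfolding \<alpha>_def [symmetric] \<beta>_def [symmetric] split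
    by (simp add: mult.assoc)
qed

theorem lemma1:
  fixes Cxx :: "real^'dx^'dx" and Cxy :: "real^'dy^'dx" and Cyy :: "real^'dy^'dy"
    and rho1 :: real and a1 :: "real^'dx" and b1 :: "real^'dy"
    and u :: "real^'dx" and v :: "real^'dy" and eta :: real
  assumes cov: "cov_blocks Cxx Cxy Cyy"
    and top: "top_sing_pair (Tmat Cxx Cxy Cyy) rho1 a1 b1"
    and uniq: "\<forall>a b. sing_pair (Tmat Cxx Cxy Cyy) rho1 a b \<longrightarrow>
                  (a = a1 \<and> b = b1) \<or> (a = - a1 \<and> b = - b1)"
    and eta: "0 < eta" "eta < 1"
    and nz: "u \<noteq> 0" "v \<noteq> 0"
    and al: "align Cxx Cyy u v (minvsqrt Cxx *v a1) (minvsqrt Cyy *v b1) \<ge> 1 - eta / 8"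
  shows "(u \<bullet> (Cxy *v v)) / (sqrt (u \<bullet> (Cxx *v u)) * sqrt (v \<bullet> (Cyy *v v)))
           \<ge> rho1 * (1 - eta)"
proof -
  have pd: "pd_mat Cxx" "pd_mat Cyy" using cov by (simp_all add: cov_blocks_def)
  define p q where "p = sgn (msqrt Cxx *v u)" and "q = sgn (msqrt Cyy *v v)"
  have unit: "norm p = 1" "norm q = 1"
    using nz msqrt_mult_eq_0_iff[OF pd(1)] msqrt_mult_eq_0_iff[OF pd(2)]
    by (simp_all add: p_def q_def norm_sgn)
  have cos: "2 - eta / 4 \<le> p \<bullet> a1 + q \<bullet> b1"
    using al by (simp add: align_def p_def q_def whitened_cosine[OF pd(1)] whitened_cosine[OF pd(2)])
  have "1 - eta \<le> (p \<bullet> a1 + q \<bullet> b1)\<^sup>2 / 2 - 1"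
  proof -
    have "4 - 2 * eta \<le> (2 - eta / 4)\<^sup>2"
      using eta mult_nonneg_nonneg[of eta eta] by (simp add: power2_eq_square algebra_simps)
    also have "\<dots> \<le> (p \<bullet> a1 + q \<bullet> b1)\<^sup>2" using cos eta by (intro power_mono) auto
    finally show ?thesis by simp
  qed
  moreover have "0 \<le> rho1" using top by (simp add: top_sing_pair_def sing_pair_def)
  ultimately have "rho1 * (1 - eta) \<le> rho1 * ((p \<bullet> a1 + q \<bullet> b1)\<^sup>2 / 2 - 1)"
    by (rule mult_left_mono)
  also have "\<dots> \<le> p \<bullet> (Tmat Cxx Cxy Cyy *v q)"
    using top top_sing_pair_bilinear_bound[OF top] unit
    by (intro sing_pair_bilinear_form_lower_bound) (auto simp: top_sing_pair_def)
  also have "\<dots> = (u \<bullet> (Cxy *v v)) / (sqrt (u \<bullet> (Cxx *v u)) * sqrt (v \<bullet> (Cyy *v v)))"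
    unfolding p_def q_def by (rule whitened_correlation[OF pd])
  finally show ?thesis .
qed

end
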